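(* Let $X$ be a topological space, let $d\ge 1$, let $k=\operatorname{coind}_{\mathbb{Z}/2}(\mathrm{Conf}_2(X))$, and assume $k\ge d-1$. Then every injective function $f\colon X\to\mathbb{R}^d$ (not assumed continuous) satisfies $\alpha(f)\ge c_{d-1,k}$.
   Context: $\mathrm{Conf}_2(X)=\{(x,y)\in X\times X: x\neq y\}$ with the subspace topology and the $\mathbb{Z}/2$-action swapping coordinates. For a $\mathbb{Z}/2$-space $Z$, $\operatorname{coind}_{\mathbb{Z}/2}(Z)$ is the largest integer $k\ge0$ such that there is a continuous $\mathbb{Z}/2$-equivariant map $S^k\to Z$ ($S^k$ with the antipodal action). Spheres carry the geodesic metric $d(u,v)=\arccos\langle u,v\rangle$. For a topological space $X$ and a metric space $Y$, $\delta(g)=\inf\{\delta\ge 0 : \text{for every } x\in X \text{ there is an open neighborhood } U_x \text{ of } x \text{ with } \operatorname{diam}(g(U_x))\le\delta\}$. For injective $f\colon X\to\mathbb{R}^d$, $\Phi_f(x,y)=\frac{f(x)-f(y)}{\|f(x)-f(y)\|}\in S^{d-1}$ and $\alpha(f)=\delta(\Phi_f)$. For a metric space $Y$ and $r\ge0$, $\mathrm{VR}(Y;r)$ is the Vietoris–Rips complex (simplices: finite subsets of diameter $\le r$), geometrically realized. For $k\ge n\ge0$, $c_{n,k}=\inf\{r\ge0:\text{there is a continuous } \mathbb{Z}/2\text{-equivariant map } S^k\to\mathrm{VR}(S^n;r)\}$, with $\mathbb{Z}/2$ acting on $\mathrm{VR}(S^n;r)$ via the antipodal map on vertices. *)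

theory Defs
  imports "HOL-Analysis.Analysis"
begin

text \<open>The sphere S^n is the library's nsphere n (points of type nat => real,
  coordinates 0..n, zero beyond n).  The antipodal map:\<close>

definition antipode :: "(nat \<Rightarrow> real) \<Rightarrow> (nat \<Rightarrow> real)" where
  "antipode x = (\<lambda>i. - x i)"

definition geo_dist :: "nat \<Rightarrow> (nat \<Rightarrow> real) \<Rightarrow> (nat \<Rightarrow> real) \<Rightarrow> real" where
  "geo_dist n u v = arccos (\<Sum>i\<le>n. u i * v i)"

definition Conf2 :: "'a topology \<Rightarrow> ('a \<times> 'a) topology" where
  "Conf2 X = subtopology (prod_topology X X)
     {(x, y). x \<in> topspace X \<and> y \<in> topspace X \<and> x \<noteq> y}"

definition swap2 :: "'a \<times> 'a \<Rightarrow> 'a \<times> 'a" where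
  "swap2 p = (snd p, fst p)"

definition equiv_map_to_Conf2 :: "'a topology \<Rightarrow> nat \<Rightarrow> bool" where
  "equiv_map_to_Conf2 X k \<longleftrightarrow>
     (\<exists>g. continuous_map (nsphere k) (Conf2 X) g \<and>
          (\<forall>x\<in>topspace (nsphere k). g (antipode x) = swap2 (g x)))"

definition is_coind_Conf2 :: "'a topology \<Rightarrow> nat \<Rightarrow> bool" where
  "is_coind_Conf2 X k \<longleftrightarrow>
     equiv_map_to_Conf2 X k \<and> (\<forall>j>k. \<not> equiv_map_to_Conf2 X j)"

definition delta_mod :: "'b topology \<Rightarrow> ('c \<Rightarrow> 'c \<Rightarrow> real) \<Rightarrow> ('b \<Rightarrow> 'c) \<Rightarrow> real" where
  "delta_mod T dm g = Inf {\<delta>. \<delta> \<ge> 0 \<and>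
     (\<forall>p\<in>topspace T. \<exists>U. openin T U \<and> p \<in> U \<and>
        (\<forall>a\<in>U. \<forall>b\<in>U. dm (g a) (g b) \<le> \<delta>))}"

text \<open>Points of R^d are functions nat => real vanishing from index d on.\<close>

definition eucl_norm :: "nat \<Rightarrow> (nat \<Rightarrow> real) \<Rightarrow> real" where
  "eucl_norm d v = sqrt (\<Sum>i<d. (v i)\<^sup>2)"

definition Phi :: "nat \<Rightarrow> ('a \<Rightarrow> nat \<Rightarrow> real) \<Rightarrow> 'a \<times> 'a \<Rightarrow> (nat \<Rightarrow> real)" where
  "Phi d f p = (\<lambda>i. (f (fst p) i - f (snd p) i) /
                     eucl_norm d (\<lambda>j. f (fst p) j - f (snd p) j))"

definition alpha :: "'a topology \<Rightarrow> nat \<Rightarrow> ('a \<Rightarrow> nat \<Rightarrow> real) \<Rightarrow> real" where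
  "alpha X d f = delta_mod (Conf2 X) (geo_dist (d - 1)) (Phi d f)"

text \<open>A point of the geometric realization is a finitely supported probability weight
  w on the vertex set S^n whose support is a simplex, i.e. has diameter <= r.\<close>

definition supp_w :: "((nat \<Rightarrow> real) \<Rightarrow> real) \<Rightarrow> (nat \<Rightarrow> real) set" where
  "supp_w w = {v. w v \<noteq> 0}"

definition vr_simplex :: "nat \<Rightarrow> real \<Rightarrow> (nat \<Rightarrow> real) set \<Rightarrow> bool" where
  "vr_simplex n r \<sigma> \<longleftrightarrow> finite \<sigma> \<and> \<sigma> \<noteq> {} \<and> \<sigma> \<subseteq> topspace (nsphere n) \<and>
     (\<forall>u\<in>\<sigma>. \<forall>v\<in>\<sigma>. geo_dist n u v \<le> r)"

definition vr_carrier :: "nat \<Rightarrow> real \<Rightarrow> ((nat \<Rightarrow> real) \<Rightarrow> real) set" where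
  "vr_carrier n r = {w. vr_simplex n r (supp_w w) \<and> (\<forall>v. w v \<ge> 0) \<and>
                        sum w (supp_w w) = 1}"

definition vr_cell :: "nat \<Rightarrow> real \<Rightarrow> (nat \<Rightarrow> real) set \<Rightarrow> ((nat \<Rightarrow> real) \<Rightarrow> real) set" where
  "vr_cell n r \<sigma> = {w \<in> vr_carrier n r. supp_w w \<subseteq> \<sigma>}"

text \<open>Weak (CW) topology: U is open iff U meets every closed simplex in a set that is open
  in the simplex's Euclidean topology (the product topology restricted to the simplex).\<close>

definition vr_open :: "nat \<Rightarrow> real \<Rightarrow> ((nat \<Rightarrow> real) \<Rightarrow> real) set \<Rightarrow> bool" where
  "vr_open n r U \<longleftrightarrow> U \<subseteq> vr_carrier n r \<and>
     (\<forall>\<sigma>. vr_simplex n r \<sigma> \<longrightarrow>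
        openin (subtopology (powertop_real UNIV) (vr_cell n r \<sigma>)) (U \<inter> vr_cell n r \<sigma>))"

lemma istopology_vr_open: "istopology (vr_open n r)"
  unfolding istopology_def
proof (intro conjI allI impI)
  fix S T assume "vr_open n r S" "vr_open n r T"
  then show "vr_open n r (S \<inter> T)"
    unfolding vr_open_def
  proof (intro conjI allI impI)
    fix \<sigma> assume s: "vr_simplex n r \<sigma>"
    have "S \<inter> T \<inter> vr_cell n r \<sigma> = (S \<inter> vr_cell n r \<sigma>) \<inter> (T \<inter> vr_cell n r \<sigma>)" by auto
    then show "openin (subtopology (powertop_real UNIV) (vr_cell n r \<sigma>)) (S \<inter> T \<inter> vr_cell n r \<sigma>)"
      using \<open>vr_open n r S\<close> \<open>vr_open n r T\<close> s by (simp add: vr_open_def openin_Int)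
  qed (use \<open>vr_open n r S\<close> in \<open>auto simp: vr_open_def\<close>)
next
  fix K assume K: "Ball K (vr_open n r)"
  show "vr_open n r (\<Union>K)"
    unfolding vr_open_def
  proof (intro conjI allI impI)
    show "\<Union>K \<subseteq> vr_carrier n r" using K by (auto simp: vr_open_def)
    fix \<sigma> assume s: "vr_simplex n r \<sigma>"
    have "\<Union>K \<inter> vr_cell n r \<sigma> = \<Union>((\<lambda>U. U \<inter> vr_cell n r \<sigma>) ` K)" by auto
    moreover have "openin (subtopology (powertop_real UNIV) (vr_cell n r \<sigma>)) (\<Union>((\<lambda>U. U \<inter> vr_cell n r \<sigma>) ` K))"
      using K s by (intro openin_Union) (auto simp: vr_open_def)
    ultimately show "openin (subtopology (powertop_real UNIV) (vr_cell n r \<sigma>)) (\<Union>K \<inter> vr_cell n r \<sigma>)"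
      by simp
  qed
qed

definition vr_top :: "nat \<Rightarrow> real \<Rightarrow> ((nat \<Rightarrow> real) \<Rightarrow> real) topology" where
  "vr_top n r = topology (vr_open n r)"

lemma openin_vr_top: "openin (vr_top n r) U \<longleftrightarrow> vr_open n r U"
  by (simp add: vr_top_def topology_inverse' istopology_vr_open)

definition vr_antipode :: "((nat \<Rightarrow> real) \<Rightarrow> real) \<Rightarrow> ((nat \<Rightarrow> real) \<Rightarrow> real)" where
  "vr_antipode w = (\<lambda>v. w (antipode v))"

definition c_const :: "nat \<Rightarrow> nat \<Rightarrow> real" where
  "c_const n k = Inf {r. r \<ge> 0 \<and>
     (\<exists>g. continuous_map (nsphere k) (vr_top n r) g \<and>
          (\<forall>x\<in>topspace (nsphere k). g (antipode x) = vr_antipode (g x)))}"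

end

(*
  Let delta be admissible in the definition of alpha(f): every point of Conf_2(X) has a
  neighbourhood on which Phi_f varies by at most delta.  Composing Phi_f with an equivariant
  map g : S^k -> Conf_2(X) gives an odd map P : S^k -> S^(d-1) which need not be continuous,
  but is locally delta-small, hence (S^k being compact) delta-small on all pairs at distance
  less than some e > 0.  Choose an antipodally symmetric finite (e/4)-net N of S^k.  The tent
  functions max(0, e/4 - |x - y|), y in N, form a partition of unity on S^k; sending the
  weight of y to the vertex P y gives a continuous odd map S^k -> VR(S^(d-1); delta), since
  the vertices carrying weight near x are images of net points less than e apart.  Hence
  c_(d-1,k) <= delta for every admissible delta, i.e. c_(d-1,k) <= alpha(f).
*)

theory Submission
  imports Defs
begin

definition nsphere_carrier :: "nat \<Rightarrow> (nat \<Rightarrow> real) set" where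
  "nsphere_carrier n = {x. (\<Sum>i\<le>n. x i ^ 2) = 1 \<and> (\<forall>i>n. x i = 0)}"

lemma nsphere_eq_top_of_set: "nsphere n = top_of_set (nsphere_carrier n)"
  by (simp add: nsphere nsphere_carrier_def euclidean_product_topology)

lemma topspace_nsphere_eq: "topspace (nsphere n) = nsphere_carrier n"
  by (simp add: nsphere_eq_top_of_set)

lemma nsphere_carrier_subset_cube:
  "nsphere_carrier n \<subseteq> PiE UNIV (\<lambda>_. {-1..1})"
proof
  fix x assume x: "x \<in> nsphere_carrier n"
  have "\<bar>x i\<bar> \<le> 1" for i
  proof (cases "i \<le> n")
    case True
    then have "x i ^ 2 \<le> (\<Sum>j\<le>n. x j ^ 2)"
      by (intro member_le_sum) auto
    with x show ?thesis by (simp add: nsphere_carrier_def abs_square_le_1)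
  qed (use x in \<open>simp add: nsphere_carrier_def\<close>)
  then show "x \<in> PiE UNIV (\<lambda>_. {-1..1})"
    by (simp add: PiE_iff abs_le_iff)
qed

lemma closed_nsphere_carrier: "closed (nsphere_carrier n)"
proof -
  have "closed ({x::nat \<Rightarrow> real. (\<Sum>i\<le>n. x i ^ 2) = 1} \<inter> (\<Inter>i\<in>{n<..}. {x. x i = 0}))"
    by (intro closed_Int closed_INT ballI closed_Collect_eq continuous_intros; simp)
  also have "\<dots> = nsphere_carrier n"
    unfolding nsphere_carrier_def by blast
  finally show ?thesis .
qed

lemma compact_nsphere_carrier: "compact (nsphere_carrier n)"
proof -
  have "compactin (powertop_real UNIV) (PiE UNIV (\<lambda>_. {-1..1::real}))"
    by (simp add: compactin_PiE)
  moreover have "closedin (powertop_real UNIV) (nsphere_carrier n)"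
    unfolding euclidean_product_topology closed_closedin [symmetric] by (rule closed_nsphere_carrier)
  ultimately have "compactin (powertop_real UNIV) (nsphere_carrier n)"
    by (rule closed_compactin[OF _ nsphere_carrier_subset_cube])
  then show ?thesis by (simp add: euclidean_product_topology)
qed

lemma antipode_antipode [simp]: "antipode (antipode x) = x"
  by (simp add: antipode_def)

lemma dist_antipode [simp]: "dist (antipode x) (antipode y) = dist x y"
  by (simp add: dist_fun_def antipode_def dist_minus)

lemma antipode_in_nsphere_carrier: "x \<in> nsphere_carrier n \<Longrightarrow> antipode x \<in> nsphere_carrier n"
  by (simp add: nsphere_carrier_def antipode_def)

lemma geo_dist_le_pi:
  assumes "u \<in> nsphere_carrier n" "v \<in> nsphere_carrier n"
  shows "geo_dist n u v \<le> pi"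
proof -
  have "\<bar>\<Sum>i\<le>n. u i * v i\<bar> \<le> (\<Sum>i\<le>n. ((u i)\<^sup>2 + (v i)\<^sup>2) / 2)"
  proof (rule order_trans[OF sum_abs sum_mono])
    fix i
    have "0 \<le> (\<bar>u i\<bar> - \<bar>v i\<bar>)\<^sup>2" by simp
    then show "\<bar>u i * v i\<bar> \<le> ((u i)\<^sup>2 + (v i)\<^sup>2) / 2"
      by (simp add: power2_eq_square abs_mult algebra_simps)
  qed
  also have "\<dots> = 1"
    using assms by (simp add: nsphere_carrier_def sum.distrib flip: sum_divide_distrib)
  finally show ?thesis
    unfolding geo_dist_def by (intro arccos_ubound) auto
qed

lemma topspace_vr_top: "topspace (vr_top n r) = vr_carrier n r"
proof -
  have "vr_open n r (vr_carrier n r)"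
    unfolding vr_open_def
  proof (intro conjI allI impI)
    fix \<sigma>
    have "vr_carrier n r \<inter> vr_cell n r \<sigma> = vr_cell n r \<sigma>"
      by (auto simp: vr_cell_def)
    then show "openin (subtopology (powertop_real UNIV) (vr_cell n r \<sigma>)) (vr_carrier n r \<inter> vr_cell n r \<sigma>)"
      by (simp add: openin_subtopology_refl)
  qed simp
  then show ?thesis
    unfolding topspace_def openin_vr_top by (auto simp: vr_open_def)
qed

lemma continuous_map_vr_cell_inclusion:
  assumes "vr_simplex n r \<sigma>"
  shows "continuous_map (subtopology (powertop_real UNIV) (vr_cell n r \<sigma>)) (vr_top n r) id"
  unfolding continuous_map_def
proof (intro conjI allI impI)
  show "id \<in> topspace (subtopology (powertop_real UNIV) (vr_cell n r \<sigma>)) \<rightarrow> topspace (vr_top n r)"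
    by (auto simp: topspace_vr_top vr_cell_def)
  fix U assume "openin (vr_top n r) U"
  then have "openin (subtopology (powertop_real UNIV) (vr_cell n r \<sigma>)) (U \<inter> vr_cell n r \<sigma>)"
    using assms by (simp add: openin_vr_top vr_open_def)
  moreover have "{x \<in> topspace (subtopology (powertop_real UNIV) (vr_cell n r \<sigma>)). id x \<in> U} = U \<inter> vr_cell n r \<sigma>"
    by auto
  ultimately show "openin (subtopology (powertop_real UNIV) (vr_cell n r \<sigma>))
      {x \<in> topspace (subtopology (powertop_real UNIV) (vr_cell n r \<sigma>)). id x \<in> U}"
    by simp
qed

lemma continuous_map_into_vr_top:
  assumes cont: "continuous_map X (powertop_real UNIV) h"
    and local: "\<And>x. x \<in> topspace X \<Longrightarrow>
      \<exists>W \<sigma>. openin X W \<and> x \<in> W \<and> vr_simplex n r \<sigma> \<and> h ` W \<subseteq> vr_cell n r \<sigma>"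
  shows "continuous_map X (vr_top n r) h"
proof -
  obtain W \<sigma> where W: "\<And>x. x \<in> topspace X \<Longrightarrow>
      openin X (W x) \<and> x \<in> W x \<and> vr_simplex n r (\<sigma> x) \<and> h ` W x \<subseteq> vr_cell n r (\<sigma> x)"
    using local by metis
  show ?thesis
  proof (rule pasting_lemma[where I = "topspace X" and T = W and f = "\<lambda>_. h"])
    fix x assume x: "x \<in> topspace X"
    have "continuous_map (subtopology X (W x)) (subtopology (powertop_real UNIV) (vr_cell n r (\<sigma> x))) h"
      using W[OF x] cont by (auto simp: continuous_map_in_subtopology continuous_map_from_subtopology)
    from continuous_map_compose[OF this continuous_map_vr_cell_inclusion] W[OF x]
    show "continuous_map (subtopology X (W x)) (vr_top n r) h"
      by simp
  qed (use W in auto)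
qed

definition bump :: "real \<Rightarrow> 'a::metric_space \<Rightarrow> 'a \<Rightarrow> real" where
  "bump r y x = max 0 (r - dist x y)"

definition nerve_map :: "'a::metric_space set \<Rightarrow> ('a \<Rightarrow> nat \<Rightarrow> real) \<Rightarrow> real \<Rightarrow> 'a \<Rightarrow> (nat \<Rightarrow> real) \<Rightarrow> real"
  where "nerve_map N P r x v = (\<Sum>y\<in>{y\<in>N. P y = v}. bump r y x) / (\<Sum>y\<in>N. bump r y x)"

lemma bump_nonneg: "0 \<le> bump r y x"
  by (simp add: bump_def)

lemma bump_eq_0_iff: "bump r y x = 0 \<longleftrightarrow> r \<le> dist x y"
  by (simp add: bump_def max_def)

lemma continuous_on_bump: "continuous_on S (bump r y)"
  unfolding bump_def by (intro continuous_intros)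

lemma bump_antipode: "bump r (antipode y) x = bump r y (antipode x)"
  by (metis bump_def antipode_antipode dist_antipode)

lemma sum_bump_pos:
  assumes "finite N" "y \<in> N" "dist x y < r"
  shows "0 < (\<Sum>y\<in>N. bump r y x)"
  using assms by (intro sum_pos2[of N y]) (auto simp: bump_def)

lemma nerve_map_nonneg: "0 \<le> nerve_map N P r x v"
  by (simp add: nerve_map_def bump_nonneg sum_nonneg)

lemma supp_nerve_map:
  assumes "finite N" "\<exists>y\<in>N. dist x y < r"
  shows "supp_w (nerve_map N P r x) = P ` {y\<in>N. dist x y < r}"
proof -
  have "nerve_map N P r x v \<noteq> 0 \<longleftrightarrow> (\<exists>y\<in>{y\<in>N. P y = v}. bump r y x \<noteq> 0)" for v
    using assms sum_bump_pos[OF assms(1)]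
    by (auto simp: nerve_map_def sum_nonneg_eq_0_iff bump_nonneg)
  then show ?thesis
    by (auto simp: supp_w_def bump_eq_0_iff not_le)
qed

lemma sum_nerve_map:
  assumes "finite N" "\<exists>y\<in>N. dist x y < r"
  shows "sum (nerve_map N P r x) (supp_w (nerve_map N P r x)) = 1"
proof -
  have "supp_w (nerve_map N P r x) \<subseteq> P ` N"
    using supp_nerve_map[OF assms] by auto
  then have "sum (nerve_map N P r x) (supp_w (nerve_map N P r x)) = sum (nerve_map N P r x) (P ` N)"
    using assms(1) by (intro sum.mono_neutral_left) (auto simp: supp_w_def)
  also have "\<dots> = (\<Sum>v\<in>P ` N. \<Sum>y\<in>{y\<in>N. P y = v}. bump r y x) / (\<Sum>y\<in>N. bump r y x)"
    by (simp add: nerve_map_def sum_divide_distrib)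
  also have "(\<Sum>v\<in>P ` N. \<Sum>y\<in>{y\<in>N. P y = v}. bump r y x) = (\<Sum>y\<in>N. bump r y x)"
    using assms(1) by (intro sum.group) auto
  finally have "sum (nerve_map N P r x) (supp_w (nerve_map N P r x))
      = (\<Sum>y\<in>N. bump r y x) / (\<Sum>y\<in>N. bump r y x)" .
  moreover have "0 < (\<Sum>y\<in>N. bump r y x)"
    using assms sum_bump_pos by blast
  ultimately show ?thesis
    by simp
qed

lemma vr_simplex_subset:
  "vr_simplex n r \<sigma> \<Longrightarrow> \<tau> \<subseteq> \<sigma> \<Longrightarrow> \<tau> \<noteq> {} \<Longrightarrow> vr_simplex n r \<tau>"
  by (auto simp: vr_simplex_def intro: finite_subset)

lemma vr_simplex_image_ball:
  assumes "finite N" "P ` N \<subseteq> nsphere_carrier n"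
    and close: "\<forall>a\<in>N. \<forall>b\<in>N. dist a b < 4 * r \<longrightarrow> geo_dist n (P a) (P b) \<le> \<delta>"
    and "\<exists>y\<in>N. dist c y < 2 * r"
  shows "vr_simplex n \<delta> (P ` {y\<in>N. dist c y < 2 * r})"
  unfolding vr_simplex_def
proof (intro conjI ballI)
  fix u v assume "u \<in> P ` {y\<in>N. dist c y < 2 * r}" "v \<in> P ` {y\<in>N. dist c y < 2 * r}"
  then obtain a b where "a \<in> N" "b \<in> N" "dist c a < 2 * r" "dist c b < 2 * r" "u = P a" "v = P b"
    by blast
  moreover have "dist a b \<le> dist c a + dist c b"
    by (metis dist_commute dist_triangle)
  ultimately show "geo_dist n u v \<le> \<delta>"
    using close by auto
qed (use assms in \<open>auto simp: topspace_nsphere_eq\<close>)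

lemma nerve_map_in_vr_cell:
  assumes "finite N" "P ` N \<subseteq> nsphere_carrier n"
    and close: "\<forall>a\<in>N. \<forall>b\<in>N. dist a b < 4 * r \<longrightarrow> geo_dist n (P a) (P b) \<le> \<delta>"
    and "dist c x < r" and covered: "\<exists>y\<in>N. dist x y < r"
  shows "nerve_map N P r x \<in> vr_cell n \<delta> (P ` {y\<in>N. dist c y < 2 * r})"
proof -
  have "dist c y < 2 * r" if "dist x y < r" for y
    using that \<open>dist c x < r\<close> dist_triangle[of c y x] by linarith
  then have near: "{y\<in>N. dist x y < r} \<subseteq> {y\<in>N. dist c y < 2 * r}"
    by auto
  have supp: "supp_w (nerve_map N P r x) = P ` {y\<in>N. dist x y < r}"
    using assms(1) covered by (rule supp_nerve_map)
  have "vr_simplex n \<delta> (P ` {y\<in>N. dist c y < 2 * r})"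
    using near covered by (intro vr_simplex_image_ball[OF assms(1-3)]) blast
  then have "vr_simplex n \<delta> (supp_w (nerve_map N P r x))"
    by (rule vr_simplex_subset) (use near covered supp in auto)
  then show ?thesis
    using near supp sum_nerve_map[OF assms(1) covered, of P]
    by (auto simp: vr_cell_def vr_carrier_def nerve_map_nonneg)
qed

lemma continuous_map_nerve_map:
  assumes "finite N" "P ` N \<subseteq> nsphere_carrier n"
    and close: "\<forall>a\<in>N. \<forall>b\<in>N. dist a b < 4 * r \<longrightarrow> geo_dist n (P a) (P b) \<le> \<delta>"
    and cover: "S \<subseteq> (\<Union>y\<in>N. ball y r)"
  shows "continuous_map (top_of_set S) (vr_top n \<delta>) (nerve_map N P r)"
proof (rule continuous_map_into_vr_top)
  have covered: "\<exists>y\<in>N. dist x y < r" if "x \<in> S" for x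
    using cover that by (force simp: dist_commute)
  have "continuous_on S (\<lambda>x. nerve_map N P r x v)" for v
    unfolding nerve_map_def
    using sum_bump_pos[OF assms(1)] covered
    by (intro continuous_intros continuous_on_bump) force
  then show "continuous_map (top_of_set S) (powertop_real UNIV) (nerve_map N P r)"
    by (simp add: continuous_map_componentwise_UNIV)
  fix x assume "x \<in> topspace (top_of_set S)"
  then have "x \<in> S" by simp
  then obtain z where "z \<in> N" "dist x z < r"
    using covered by blast
  then have "0 < r" "dist x z < 2 * r"
    using zero_le_dist[of x z] by linarith+
  show "\<exists>W \<sigma>. openin (top_of_set S) W \<and> x \<in> W \<and> vr_simplex n \<delta> \<sigma> \<and> nerve_map N P r ` W \<subseteq> vr_cell n \<delta> \<sigma>"
  proof (intro exI conjI)
    show "openin (top_of_set S) (S \<inter> ball x r)"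
      by (simp add: openin_open_Int)
    show "x \<in> S \<inter> ball x r"
      using \<open>x \<in> S\<close> \<open>0 < r\<close> by simp
    show "vr_simplex n \<delta> (P ` {y\<in>N. dist x y < 2 * r})"
      using \<open>z \<in> N\<close> \<open>dist x z < 2 * r\<close> by (intro vr_simplex_image_ball[OF assms(1-3)] bexI)
    show "nerve_map N P r ` (S \<inter> ball x r) \<subseteq> vr_cell n \<delta> (P ` {y\<in>N. dist x y < 2 * r})"
    proof (rule image_subsetI)
      fix x' assume "x' \<in> S \<inter> ball x r"
      then show "nerve_map N P r x' \<in> vr_cell n \<delta> (P ` {y\<in>N. dist x y < 2 * r})"
        using covered by (intro nerve_map_in_vr_cell[OF assms(1-3)]) auto
    qed
  qed
qed

lemma nerve_map_antipode:
  fixes N :: "(nat \<Rightarrow> real) set"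
  assumes N: "antipode ` N = N" and odd: "\<And>y. y \<in> N \<Longrightarrow> P (antipode y) = antipode (P y)"
  shows "nerve_map N P r (antipode x) = vr_antipode (nerve_map N P r x)"
proof -
  have reindex: "(\<Sum>y\<in>{y\<in>N. P y = v}. bump r y (antipode x)) = (\<Sum>y\<in>{y\<in>N. P y = antipode v}. bump r y x)"
    for v
  proof (rule sum.reindex_bij_witness[where i = antipode and j = antipode])
    fix y assume "y \<in> {y\<in>N. P y = antipode v}"
    then show "antipode y \<in> {y\<in>N. P y = v}"
      using N odd by force
  next
    fix y assume "y \<in> {y\<in>N. P y = v}"
    then show "antipode y \<in> {y\<in>N. P y = antipode v}"
      using N odd by force
  qed (simp_all add: bump_antipode)
  have "(\<Sum>y\<in>N. bump r y (antipode x)) = (\<Sum>y\<in>N. bump r y x)"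
    by (rule sum.reindex_bij_witness[where i = antipode and j = antipode]) (use N in \<open>auto simp: bump_antipode\<close>)
  with reindex show ?thesis
    by (simp add: nerve_map_def vr_antipode_def fun_eq_iff)
qed

lemma diameter_pair_le: "diameter {a, b} \<le> dist a b"
  unfolding diameter_def
  by (simp only: insert_not_empty if_False) (rule cSUP_least; auto simp: dist_commute)

lemma Lebesgue_number_pairs:
  fixes S :: "'a::metric_space set"
  assumes "compact S"
    and local: "\<And>x. x \<in> S \<Longrightarrow> \<exists>V. open V \<and> x \<in> V \<and> (\<forall>a\<in>V \<inter> S. \<forall>b\<in>V \<inter> S. R a b)"
  obtains e where "0 < e" "\<And>a b. a \<in> S \<Longrightarrow> b \<in> S \<Longrightarrow> dist a b < e \<Longrightarrow> R a b"
proof -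
  define \<C> where "\<C> = {V. open V \<and> (\<forall>a\<in>V \<inter> S. \<forall>b\<in>V \<inter> S. R a b)}"
  have cover: "S \<subseteq> \<Union>\<C>"
    unfolding \<C>_def using local by blast
  have "{} \<in> \<C>"
    by (simp add: \<C>_def)
  then have "\<C> \<noteq> {}"
    by blast
  moreover have "\<And>V. V \<in> \<C> \<Longrightarrow> open V"
    by (simp add: \<C>_def)
  ultimately obtain e where "0 < e" and e: "\<And>T. T \<subseteq> S \<Longrightarrow> diameter T < e \<Longrightarrow> \<exists>V\<in>\<C>. T \<subseteq> V"
    using Lebesgue_number_lemma[OF \<open>compact S\<close> _ cover] by blast
  have close: "R a b" if "a \<in> S" "b \<in> S" "dist a b < e" for a b
  proof -
    have "{a, b} \<subseteq> S" "diameter {a, b} < e"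
      using that diameter_pair_le[of a b] by auto
    then obtain V where "V \<in> \<C>" "{a, b} \<subseteq> V"
      using e by blast
    moreover from \<open>V \<in> \<C>\<close> have "\<forall>a\<in>V \<inter> S. \<forall>b\<in>V \<inter> S. R a b"
      by (simp add: \<C>_def)
    ultimately show ?thesis
      using that by blast
  qed
  show ?thesis
    using \<open>0 < e\<close> close by (rule that)
qed

lemma equivariant_vr_map_of_locally_small:
  fixes P :: "(nat \<Rightarrow> real) \<Rightarrow> nat \<Rightarrow> real"
  assumes sphere: "\<And>x. x \<in> nsphere_carrier k \<Longrightarrow> P x \<in> nsphere_carrier n"
    and odd: "\<And>x. x \<in> nsphere_carrier k \<Longrightarrow> P (antipode x) = antipode (P x)"
    and small: "\<And>x. x \<in> nsphere_carrier k \<Longrightarrow> \<exists>V. open V \<and> x \<in> V \<and>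
      (\<forall>a\<in>V \<inter> nsphere_carrier k. \<forall>b\<in>V \<inter> nsphere_carrier k. geo_dist n (P a) (P b) \<le> \<delta>)"
  shows "\<exists>h. continuous_map (nsphere k) (vr_top n \<delta>) h \<and>
           (\<forall>x\<in>topspace (nsphere k). h (antipode x) = vr_antipode (h x))"
proof -
  let ?S = "nsphere_carrier k"
  obtain e where "0 < e"
    and e: "\<And>a b. a \<in> ?S \<Longrightarrow> b \<in> ?S \<Longrightarrow> dist a b < e \<Longrightarrow> geo_dist n (P a) (P b) \<le> \<delta>"
    using Lebesgue_number_pairs[OF compact_nsphere_carrier small] by blast
  define r where "r = e / 4"
  have "0 < r"
    using \<open>0 < e\<close> by (simp add: r_def)
  with compact_nsphere_carrier[THEN compact_imp_seq_compact, THEN seq_compact_imp_totally_bounded]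
  obtain N0 where N0: "finite N0" "N0 \<subseteq> ?S" "?S \<subseteq> (\<Union>y\<in>N0. ball y r)"
    by meson
  define N where "N = N0 \<union> antipode ` N0"
  have "finite N" "N \<subseteq> ?S" "antipode ` N = N"
    using N0 antipode_in_nsphere_carrier by (auto simp: N_def image_Un image_image)
  have "continuous_map (top_of_set ?S) (vr_top n \<delta>) (nerve_map N P r)"
  proof (rule continuous_map_nerve_map)
    show "P ` N \<subseteq> nsphere_carrier n"
      using \<open>N \<subseteq> ?S\<close> sphere by blast
    show "\<forall>a\<in>N. \<forall>b\<in>N. dist a b < 4 * r \<longrightarrow> geo_dist n (P a) (P b) \<le> \<delta>"
      using \<open>N \<subseteq> ?S\<close> e by (auto simp: r_def)
    show "?S \<subseteq> (\<Union>y\<in>N. ball y r)"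
      using N0(3) by (auto simp: N_def)
  qed fact
  moreover have "nerve_map N P r (antipode x) = vr_antipode (nerve_map N P r x)" for x
    using \<open>antipode ` N = N\<close> \<open>N \<subseteq> ?S\<close> odd by (intro nerve_map_antipode) auto
  ultimately show ?thesis
    by (auto simp: nsphere_eq_top_of_set)
qed

lemma topspace_Conf2:
  "topspace (Conf2 X) = {(x, y). x \<in> topspace X \<and> y \<in> topspace X \<and> x \<noteq> y}"
  by (auto simp: Conf2_def topspace_subtopology topspace_prod_topology)

lemma Phi_swap2: "Phi d f (swap2 p) = antipode (Phi d f p)"
proof -
  have "eucl_norm d (\<lambda>j. f (snd p) j - f (fst p) j) = eucl_norm d (\<lambda>j. f (fst p) j - f (snd p) j)"
    unfolding eucl_norm_def by (simp add: power2_commute)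
  then show ?thesis
    by (simp add: Phi_def swap2_def antipode_def fun_eq_iff minus_divide_left)
qed

lemma Phi_in_nsphere_carrier:
  assumes "1 \<le> d" and vanish: "\<forall>x\<in>topspace X. \<forall>i\<ge>d. f x i = 0"
    and "inj_on f (topspace X)" and "p \<in> topspace (Conf2 X)"
  shows "Phi d f p \<in> nsphere_carrier (d - 1)"
proof -
  obtain a b where p: "p = (a, b)" "a \<in> topspace X" "b \<in> topspace X" "a \<noteq> b"
    using assms(4) by (auto simp: topspace_Conf2)
  define u where "u = (\<lambda>j. f a j - f b j)"
  have "f a \<noteq> f b"
    using \<open>inj_on f (topspace X)\<close> p by (auto simp: inj_on_def)
  then obtain i where "u i \<noteq> 0"
    by (auto simp: u_def fun_eq_iff)
  then have "i < d"
    using vanish p by (metis not_le u_def diff_self)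
  then have "0 < (\<Sum>j<d. (u j)\<^sup>2)"
    using \<open>u i \<noteq> 0\<close> by (intro sum_pos2[of _ i]) auto
  moreover have "(eucl_norm d u)\<^sup>2 = (\<Sum>j<d. (u j)\<^sup>2)"
    unfolding eucl_norm_def by (simp add: sum_nonneg)
  moreover have "{..d - 1} = {..<d}"
    using \<open>1 \<le> d\<close> by auto
  ultimately have "(\<Sum>j\<le>d - 1. (u j / eucl_norm d u)\<^sup>2) = 1"
    by (simp add: power_divide flip: sum_divide_distrib)
  moreover have "u j = 0" if "d - 1 < j" for j
    using that vanish p by (simp add: u_def)
  moreover have "Phi d f p = (\<lambda>j. u j / eucl_norm d u)"
    by (simp add: Phi_def p u_def)
  ultimately show ?thesis
    by (simp add: nsphere_carrier_def)
qed

lemma equivariant_vr_map_of_Phi_bound: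
  assumes "1 \<le> d" "\<forall>x\<in>topspace X. \<forall>i\<ge>d. f x i = 0" "inj_on f (topspace X)"
    and "equiv_map_to_Conf2 X k"
    and bound: "\<forall>p\<in>topspace (Conf2 X). \<exists>U. openin (Conf2 X) U \<and> p \<in> U \<and>
      (\<forall>a\<in>U. \<forall>b\<in>U. geo_dist (d - 1) (Phi d f a) (Phi d f b) \<le> \<delta>)"
  shows "\<exists>h. continuous_map (nsphere k) (vr_top (d - 1) \<delta>) h \<and>
           (\<forall>x\<in>topspace (nsphere k). h (antipode x) = vr_antipode (h x))"
proof -
  obtain g where g: "continuous_map (nsphere k) (Conf2 X) g"
    and g_odd: "\<And>x. x \<in> nsphere_carrier k \<Longrightarrow> g (antipode x) = swap2 (g x)"
    using \<open>equiv_map_to_Conf2 X k\<close> by (auto simp: equiv_map_to_Conf2_def topspace_nsphere_eq)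
  have g_in: "g x \<in> topspace (Conf2 X)" if "x \<in> nsphere_carrier k" for x
    using continuous_map_image_subset_topspace[OF g] that by (auto simp: topspace_nsphere_eq)
  show ?thesis
  proof (rule equivariant_vr_map_of_locally_small[where P = "\<lambda>x. Phi d f (g x)"])
    fix x assume x: "x \<in> nsphere_carrier k"
    show "Phi d f (g x) \<in> nsphere_carrier (d - 1)"
      using Phi_in_nsphere_carrier[OF assms(1-3) g_in[OF x]] .
    show "Phi d f (g (antipode x)) = antipode (Phi d f (g x))"
      using g_odd[OF x] by (simp add: Phi_swap2)
    obtain U where U: "openin (Conf2 X) U" "g x \<in> U"
      "\<forall>a\<in>U. \<forall>b\<in>U. geo_dist (d - 1) (Phi d f a) (Phi d f b) \<le> \<delta>"
      using bound g_in[OF x] by blast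
    have "openin (top_of_set (nsphere_carrier k)) {y \<in> nsphere_carrier k. g y \<in> U}"
      using openin_continuous_map_preimage[OF g U(1)] by (simp add: nsphere_eq_top_of_set)
    then obtain V where "open V" "{y \<in> nsphere_carrier k. g y \<in> U} = nsphere_carrier k \<inter> V"
      by (auto simp: openin_open)
    then show "\<exists>V. open V \<and> x \<in> V \<and> (\<forall>a\<in>V \<inter> nsphere_carrier k. \<forall>b\<in>V \<inter> nsphere_carrier k.
        geo_dist (d - 1) (Phi d f (g a)) (Phi d f (g b)) \<le> \<delta>)"
      using x U by blast
  qed
qed

theorem theorem3p5:
  fixes X :: "'a topology" and d k :: nat and f :: "'a \<Rightarrow> nat \<Rightarrow> real"
  assumes "d \<ge> 1"
    and "is_coind_Conf2 X k"
    and "k \<ge> d - 1"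
    and "\<forall>x\<in>topspace X. \<forall>i\<ge>d. f x i = 0"
    and "inj_on f (topspace X)"
  shows "alpha X d f \<ge> c_const (d - 1) k"
proof -
  let ?D = "{\<delta>. \<delta> \<ge> 0 \<and> (\<forall>p\<in>topspace (Conf2 X). \<exists>U. openin (Conf2 X) U \<and> p \<in> U \<and>
     (\<forall>a\<in>U. \<forall>b\<in>U. geo_dist (d - 1) (Phi d f a) (Phi d f b) \<le> \<delta>))}"
  have "equiv_map_to_Conf2 X k"
    using assms(2) by (simp add: is_coind_Conf2_def)
  then have lower: "c_const (d - 1) k \<le> \<delta>" if "\<delta> \<in> ?D" for \<delta>
    unfolding c_const_def
    using that equivariant_vr_map_of_Phi_bound[OF assms(1,4,5)]
    by (intro cInf_lower bdd_belowI[of _ 0]) auto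
  have "pi \<in> ?D"
  proof (intro CollectI conjI ballI exI[of _ "topspace (Conf2 X)"])
    fix p a b assume "a \<in> topspace (Conf2 X)" "b \<in> topspace (Conf2 X)"
    then show "geo_dist (d - 1) (Phi d f a) (Phi d f b) \<le> pi"
      by (intro geo_dist_le_pi Phi_in_nsphere_carrier[OF assms(1,4,5)])
  qed auto
  then have "c_const (d - 1) k \<le> Inf ?D"
    using lower by (intro cInf_greatest) blast+
  then show ?thesis
    by (simp add: alpha_def delta_mod_def)
qed

end
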